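(* Let $f$ satisfy the standing assumptions below, and for $\xi,u_3\in(0,1)$ define $$G_0(\xi,u_3)=\frac{1}{4\sqrt2}\int_{-1}^{1}f'\!\left(\frac{1-\mu}{2}u_3+\frac{1+\mu}{2}\xi\right)\sqrt{1-\mu}\,d\mu,\qquad V_0(\xi,u_3)=\frac{4}{15}\xi+\frac25u_3 .$$ Then, for $u_3$ sufficiently close to $0$, the minimization problem $\min_{0<\xi<1}\left[-G_0(\xi,u_3)/V_0(\xi,u_3)\right]$ has one and only one critical point in $(0,1)$, and hence one and only one minimizing point. Furthermore, this critical point tends to $1$ as $u_3\to0$.
   Context: Standing assumptions: $f:(0,1)\to\mathbb{R}$ is the inverse of a smooth strictly decreasing function $u_0:\mathbb{R}\to(0,1)$ with $u_0(-\infty)=1$, $u_0(+\infty)=0$; thus $f$ is smooth with $f'<0$, $\lim_{u\to0}f(u)=+\infty$, $\lim_{u\to1}f(u)=-\infty$; moreover $f'''(u)<0$ for $u$ in a neighborhood of $0$ and in a neighborhood of $1$. *)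

theory Defs
  imports "HOL-Analysis.Analysis"
begin

definition smooth_on :: "real set \<Rightarrow> (real \<Rightarrow> real) \<Rightarrow> bool" where
  "smooth_on S g \<longleftrightarrow> (\<forall>n. \<forall>x\<in>S. ((deriv ^^ n) g) differentiable (at x))"

definition standing_f :: "(real \<Rightarrow> real) \<Rightarrow> bool" where
  "standing_f f \<longleftrightarrow>
     (\<exists>u0 :: real \<Rightarrow> real.
        smooth_on UNIV u0
      \<and> (\<forall>x y. x < y \<longrightarrow> u0 y < u0 x)
      \<and> (\<forall>x. u0 x \<in> {0<..<1})
      \<and> (u0 \<longlongrightarrow> 1) at_bot \<and> (u0 \<longlongrightarrow> 0) at_top
      \<and> (\<forall>x. f (u0 x) = x) \<and> (\<forall>u\<in>{0<..<1}. u0 (f u) = u))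
   \<and> smooth_on {0<..<1} f
   \<and> (\<forall>u\<in>{0<..<1}. deriv f u < 0)
   \<and> filterlim f at_top (at_right 0)
   \<and> filterlim f at_bot (at_left 1)
   \<and> (\<exists>d>0. \<forall>u\<in>{0<..<d}. (deriv ^^ 3) f u < 0)
   \<and> (\<exists>d>0. \<forall>u\<in>{1-d<..<1}. (deriv ^^ 3) f u < 0)"

definition G0 :: "(real \<Rightarrow> real) \<Rightarrow> real \<Rightarrow> real \<Rightarrow> real" where
  "G0 f \<xi> u3 = 1 / (4 * sqrt 2) *
     integral {-1..1} (\<lambda>\<mu>. deriv f ((1 - \<mu>) / 2 * u3 + (1 + \<mu>) / 2 * \<xi>) * sqrt (1 - \<mu>))"

definition V0 :: "real \<Rightarrow> real \<Rightarrow> real" where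
  "V0 \<xi> u3 = 4 / 15 * \<xi> + 2 / 5 * u3"

definition J0 :: "(real \<Rightarrow> real) \<Rightarrow> real \<Rightarrow> real \<Rightarrow> real" where
  "J0 f u3 \<xi> = - G0 f \<xi> u3 / V0 \<xi> u3"

end

theory Submission
  imports Defs
begin

text \<open>
  Write I_k(g)(u, \<xi>) (seg_moment g k u \<xi>) for the integral over \<mu> \<in> [-1, 1] of g at the
  point of the segment from u to \<xi> with parameter \<mu>, weighted by ((1 + \<mu>) / 2)^k sqrt (1 - \<mu>).
  Then J0 = - I_0(f') / (4 sqrt 2 V0), its \<xi>-derivative is - H / (4 sqrt 2 V0^2) with
  H = I_1(f'') V0 - 4/15 I_0(f'), and H' = I_2(f''') V0.

  Since f' < 0 we have I_0(f') < 0, so H > 0 wherever I_1(f'') \<ge> 0. Because f'' > 0 near 0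
  and f(u) \<rightarrow> \<infinity> as u \<rightarrow> 0, an integration by parts shows I_1(f'') \<ge> 0 for all \<xi> \<le> \<beta>
  once u is small, for every \<beta> < 1. Near 1, f''' < 0, and since f \<rightarrow> -\<infinity> at 1 the
  quantities sqrt (1 - t) |f'(t)| and sqrt (1 - t) |f''(t)| are unbounded; this makes
  I_2(f''') < 0 and I_1(f'') arbitrarily negative near \<xi> = 1. Hence H decreases on some
  [\<xi>0, 1) and becomes negative, so it has exactly one zero, where it changes sign from + to -.
  That zero is the unique critical point and the unique minimiser of J0, and it exceeds any
  \<beta> < 1 once u is small.
\<close>

section \<open>Weighted integrals along a segment\<close>

definition segpt :: "real \<Rightarrow> real \<Rightarrow> real \<Rightarrow> real" where
  "segpt u \<xi> \<mu> = (1 - \<mu>) / 2 * u + (1 + \<mu>) / 2 * \<xi>"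

definition segpar :: "real \<Rightarrow> real \<Rightarrow> real \<Rightarrow> real" where
  "segpar u \<xi> v = 2 * (v - u) / (\<xi> - u) - 1"

definition seg_weight :: "nat \<Rightarrow> real \<Rightarrow> real" where
  "seg_weight k \<mu> = ((1 + \<mu>) / 2) ^ k * sqrt (1 - \<mu>)"

text \<open>seg_moment (deriv f) 0 u \<xi> is 4 sqrt 2 times the paper's G0(\<xi>, u3) at u3 = u.\<close>
definition seg_moment :: "(real \<Rightarrow> real) \<Rightarrow> nat \<Rightarrow> real \<Rightarrow> real \<Rightarrow> real" where
  "seg_moment g k u \<xi> = integral {-1..1} (\<lambda>\<mu>. g (segpt u \<xi> \<mu>) * seg_weight k \<mu>)"

lemma segpt_eq: "segpt u \<xi> \<mu> = u + (1 + \<mu>) / 2 * (\<xi> - u)"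
  unfolding segpt_def by (simp add: field_simps)

lemma segpt_minus_one [simp]: "segpt u \<xi> (-1) = u"
  unfolding segpt_def by simp

lemma segpt_segpar [simp]: "\<xi> \<noteq> u \<Longrightarrow> segpt u \<xi> (segpar u \<xi> v) = v"
  unfolding segpt_eq segpar_def by (simp add: field_simps)

lemma segpt_mono: "u \<le> \<xi> \<Longrightarrow> \<mu> \<le> \<mu>' \<Longrightarrow> segpt u \<xi> \<mu> \<le> segpt u \<xi> \<mu>'"
  unfolding segpt_eq by (intro add_left_mono mult_right_mono) auto

lemma segpt_between:
  assumes "\<mu> \<in> {-1..1}"
  shows "min u \<xi> \<le> segpt u \<xi> \<mu> \<and> segpt u \<xi> \<mu> \<le> max u \<xi>"
proof -
  define t where "t = (1 + \<mu>) / 2"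
  have t: "0 \<le> t" "0 \<le> 1 - t" using assms by (auto simp: t_def)
  have eq: "segpt u \<xi> \<mu> = (1 - t) * u + t * \<xi>" unfolding segpt_def t_def by (simp add: field_simps)
  have "(1 - t) * min u \<xi> + t * min u \<xi> \<le> (1 - t) * u + t * \<xi>"
    using t by (intro add_mono mult_left_mono) auto
  moreover have "(1 - t) * u + t * \<xi> \<le> (1 - t) * max u \<xi> + t * max u \<xi>"
    using t by (intro add_mono mult_left_mono) auto
  ultimately show ?thesis unfolding eq by (simp add: algebra_simps)
qed

lemma segpt_in_01:
  "\<mu> \<in> {-1..1} \<Longrightarrow> u \<in> {0<..<1} \<Longrightarrow> \<xi> \<in> {0<..<1} \<Longrightarrow> segpt u \<xi> \<mu> \<in> {0<..<1}"
  using segpt_between[of \<mu> u \<xi>] by auto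

lemma segpt_mem_segpar_interval:
  assumes "u < \<xi>" "\<mu> \<in> {segpar u \<xi> v..segpar u \<xi> w}"
  shows "segpt u \<xi> \<mu> \<in> {v..w}"
  using segpt_mono[of u \<xi> "segpar u \<xi> v" \<mu>] segpt_mono[of u \<xi> \<mu> "segpar u \<xi> w"] assms by auto

lemma has_real_derivative_segpt: "(segpt u \<xi> has_real_derivative (\<xi> - u) / 2) (at \<mu>)"
  unfolding segpt_def by (auto intro!: derivative_eq_intros simp: field_simps)

lemma segpar_mono: "u < \<xi> \<Longrightarrow> v \<le> w \<Longrightarrow> segpar u \<xi> v \<le> segpar u \<xi> w"
  unfolding segpar_def by (simp add: divide_right_mono)

lemma segpar_start [simp]: "\<xi> \<noteq> u \<Longrightarrow> segpar u \<xi> u = -1"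
  unfolding segpar_def by simp

lemma segpar_end [simp]: "\<xi> \<noteq> u \<Longrightarrow> segpar u \<xi> \<xi> = 1"
  unfolding segpar_def by (simp add: field_simps)

lemma segpar_ge_minus_one: "u < \<xi> \<Longrightarrow> u \<le> v \<Longrightarrow> -1 \<le> segpar u \<xi> v"
  unfolding segpar_def by simp

lemma segpar_le_one: "u < \<xi> \<Longrightarrow> v \<le> \<xi> \<Longrightarrow> segpar u \<xi> v \<le> 1"
  unfolding segpar_def by (simp add: divide_le_eq)

lemma one_plus_segpar: "u < \<xi> \<Longrightarrow> (1 + segpar u \<xi> v) / 2 = (v - u) / (\<xi> - u)"
  unfolding segpar_def by (simp add: field_simps)

lemma one_minus_segpar: "u < \<xi> \<Longrightarrow> 1 - segpar u \<xi> v = 2 * (\<xi> - v) / (\<xi> - u)"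
  unfolding segpar_def by (simp add: field_simps)

lemma segpar_stretch:
  assumes "u < \<xi>" "\<xi> - u \<le> 1"
  shows "u \<le> v \<Longrightarrow> v - u \<le> (1 + segpar u \<xi> v) / 2"
    and "v \<le> \<xi> \<Longrightarrow> 2 * (\<xi> - v) \<le> 1 - segpar u \<xi> v"
  using assms by (auto simp: one_plus_segpar one_minus_segpar le_divide_eq mult_left_le)

lemma seg_weight_Suc: "seg_weight (Suc k) \<mu> = (1 + \<mu>) / 2 * seg_weight k \<mu>"
  unfolding seg_weight_def by simp

lemma seg_weight_bounds:
  assumes "\<mu> \<in> {-1..1}"
  shows "0 \<le> seg_weight k \<mu>" "seg_weight k \<mu> \<le> 2"
proof -
  have p: "0 \<le> ((1 + \<mu>) / 2) ^ k" "((1 + \<mu>) / 2) ^ k \<le> 1" using assms by (auto simp: power_le_one)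
  have s: "sqrt (1 - \<mu>) \<le> sqrt 4" using assms by (intro real_sqrt_le_mono) auto
  show "0 \<le> seg_weight k \<mu>" using p assms unfolding seg_weight_def by simp
  have "seg_weight k \<mu> \<le> 1 * 2" unfolding seg_weight_def using p s assms by (intro mult_mono) auto
  then show "seg_weight k \<mu> \<le> 2" by simp
qed

lemma seg_weight_ge:
  assumes "0 \<le> m" "m \<le> \<mu>" "\<mu> \<le> m'" "m' \<le> 1"
  shows "(1 / 2) ^ k * sqrt (1 - m') \<le> seg_weight k \<mu>"
  unfolding seg_weight_def using assms by (intro mult_mono power_mono) auto

lemma integrable_seg_integrand:
  assumes "continuous_on {0<..<1} g" "u \<in> {0<..<1}" "\<xi> \<in> {0<..<1}" "-1 \<le> a" "b \<le> 1"
  shows "(\<lambda>\<mu>. g (segpt u \<xi> \<mu>) * seg_weight k \<mu>) integrable_on {a..b}"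
proof -
  have "continuous_on {-1..1} (segpt u \<xi>)"
    unfolding segpt_def by (intro continuous_intros) auto
  moreover have "segpt u \<xi> ` {-1..1} \<subseteq> {0<..<1}" using segpt_in_01 assms(2,3) by auto
  ultimately have "continuous_on {-1..1} (\<lambda>\<mu>. g (segpt u \<xi> \<mu>))"
    using continuous_on_compose2[OF assms(1)] by blast
  then have "continuous_on {-1..1} (\<lambda>\<mu>. g (segpt u \<xi> \<mu>) * seg_weight k \<mu>)"
    unfolding seg_weight_def by (intro continuous_intros) auto
  then have "continuous_on {a..b} (\<lambda>\<mu>. g (segpt u \<xi> \<mu>) * seg_weight k \<mu>)"
    by (rule continuous_on_subset) (use assms in auto)
  then show ?thesis by (rule integrable_continuous_interval)
qed

lemma integral_seg_le:
  assumes "continuous_on {0<..<1} g" "u \<in> {0<..<1}" "\<xi> \<in> {0<..<1}" "-1 \<le> a" "a \<le> b" "b \<le> 1"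
    and "0 \<le> M" "\<And>\<mu>. \<mu> \<in> {a..b} \<Longrightarrow> g (segpt u \<xi> \<mu>) \<le> M"
  shows "integral {a..b} (\<lambda>\<mu>. g (segpt u \<xi> \<mu>) * seg_weight k \<mu>) \<le> 2 * (b - a) * M"
proof -
  have "g (segpt u \<xi> \<mu>) * seg_weight k \<mu> \<le> 2 * M" if "\<mu> \<in> {a..b}" for \<mu>
  proof -
    have w: "0 \<le> seg_weight k \<mu>" "seg_weight k \<mu> \<le> 2"
      using seg_weight_bounds[of \<mu> k] that assms(4,6) by auto
    have "g (segpt u \<xi> \<mu>) * seg_weight k \<mu> \<le> M * seg_weight k \<mu>"
      using assms(8)[OF that] w by (intro mult_right_mono)
    also have "\<dots> \<le> M * 2" using w assms(7) by (intro mult_left_mono)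
    finally show ?thesis by simp
  qed
  then have "integral {a..b} (\<lambda>\<mu>. g (segpt u \<xi> \<mu>) * seg_weight k \<mu>) \<le> integral {a..b} (\<lambda>_. 2 * M)"
    by (intro integral_le integrable_seg_integrand assms(1-4,6)) auto
  then show ?thesis using assms(5) by (simp add: algebra_simps)
qed

lemma integral_seg_ge:
  assumes "continuous_on {0<..<1} g" "u \<in> {0<..<1}" "\<xi> \<in> {0<..<1}" "-1 \<le> a" "a \<le> b" "b \<le> 1"
    and "0 \<le> M" "\<And>\<mu>. \<mu> \<in> {a..b} \<Longrightarrow> - M \<le> g (segpt u \<xi> \<mu>)"
  shows "- (2 * (b - a) * M) \<le> integral {a..b} (\<lambda>\<mu>. g (segpt u \<xi> \<mu>) * seg_weight k \<mu>)"
proof -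
  have "continuous_on {0<..<1} (\<lambda>x. - g x)" using assms(1) by (rule continuous_on_minus)
  from integral_seg_le[OF this assms(2-7)] assms(8)
  have "integral {a..b} (\<lambda>\<mu>. - (g (segpt u \<xi> \<mu>) * seg_weight k \<mu>)) \<le> 2 * (b - a) * M"
    by fastforce
  then show ?thesis by (simp add: integral_neg)
qed

lemma has_integral_seg_deriv:
  assumes G: "\<And>x. x \<in> {0<..<1} \<Longrightarrow> (G has_real_derivative g x) (at x)"
    and "u \<in> {0<..<1}" "\<xi> \<in> {0<..<1}" "u \<noteq> \<xi>" "-1 \<le> a" "a \<le> b" "b \<le> 1"
  shows "((\<lambda>\<mu>. g (segpt u \<xi> \<mu>)) has_integral
           2 / (\<xi> - u) * (G (segpt u \<xi> b) - G (segpt u \<xi> a))) {a..b}"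
proof -
  have "((\<lambda>\<mu>. 2 / (\<xi> - u) * G (segpt u \<xi> \<mu>)) has_real_derivative g (segpt u \<xi> \<mu>)) (at \<mu>)"
    if "\<mu> \<in> {a..b}" for \<mu>
  proof -
    have "segpt u \<xi> \<mu> \<in> {0<..<1}" using segpt_in_01 that assms by auto
    from DERIV_cmult[OF DERIV_chain2[OF G[OF this] has_real_derivative_segpt], of "2 / (\<xi> - u)"]
    show ?thesis by (rule DERIV_cong) (use assms(4) in \<open>simp add: field_simps\<close>)
  qed
  then have "((\<lambda>\<mu>. g (segpt u \<xi> \<mu>)) has_integral
      2 / (\<xi> - u) * G (segpt u \<xi> b) - 2 / (\<xi> - u) * G (segpt u \<xi> a)) {a..b}"
    by (intro fundamental_theorem_of_calculus assms(6))
      (auto simp: has_real_derivative_iff_has_vector_derivative[symmetric]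
        intro: has_field_derivative_at_within)
  then show ?thesis by (simp add: right_diff_distrib)
qed

text \<open>Integration by parts against the weight (1 + \<mu>) / 2.\<close>
lemma has_integral_seg_second_deriv:
  assumes G: "\<And>x. x \<in> {0<..<1} \<Longrightarrow> (G has_real_derivative g x) (at x)"
    and g: "\<And>x. x \<in> {0<..<1} \<Longrightarrow> (g has_real_derivative h x) (at x)"
    and "u \<in> {0<..<1}" "\<xi> \<in> {0<..<1}" "u \<noteq> \<xi>" "-1 \<le> b" "b \<le> 1"
  shows "((\<lambda>\<mu>. h (segpt u \<xi> \<mu>) * ((1 + \<mu>) / 2)) has_integral
           2 / (\<xi> - u) * (g (segpt u \<xi> b) * ((1 + b) / 2) - (G (segpt u \<xi> b) - G u) / (\<xi> - u))) {-1..b}"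
proof -
  define s where "s = \<xi> - u"
  have s: "s \<noteq> 0" using assms(5) by (simp add: s_def)
  define P where "P \<mu> = 2 / s * (g (segpt u \<xi> \<mu>) * ((1 + \<mu>) / 2) - G (segpt u \<xi> \<mu>) / s)" for \<mu>
  have "(P has_real_derivative h (segpt u \<xi> \<mu>) * ((1 + \<mu>) / 2)) (at \<mu>)" if "\<mu> \<in> {-1..b}" for \<mu>
  proof -
    have x: "segpt u \<xi> \<mu> \<in> {0<..<1}" using segpt_in_01 that assms by auto
    have dg: "((\<lambda>\<mu>. g (segpt u \<xi> \<mu>)) has_real_derivative h (segpt u \<xi> \<mu>) * (s / 2)) (at \<mu>)"
      unfolding s_def by (rule DERIV_chain2[OF g[OF x] has_real_derivative_segpt])
    have dG: "((\<lambda>\<mu>. G (segpt u \<xi> \<mu>)) has_real_derivative g (segpt u \<xi> \<mu>) * (s / 2)) (at \<mu>)"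
      unfolding s_def by (rule DERIV_chain2[OF G[OF x] has_real_derivative_segpt])
    have dw: "((\<lambda>\<mu>. (1 + \<mu>) / 2) has_real_derivative 1 / 2) (at \<mu>)"
      by (auto intro!: derivative_eq_intros)
    from DERIV_cmult[OF DERIV_diff[OF DERIV_mult[OF dg dw] DERIV_cdivide[OF dG, of s]], of "2 / s"]
    show ?thesis unfolding P_def[abs_def] by (rule DERIV_cong) (use s in \<open>simp add: field_simps\<close>)
  qed
  then have "((\<lambda>\<mu>. h (segpt u \<xi> \<mu>) * ((1 + \<mu>) / 2)) has_integral P b - P (-1)) {-1..b}"
    by (intro fundamental_theorem_of_calculus assms(6))
      (auto simp: has_real_derivative_iff_has_vector_derivative[symmetric]
        intro: has_field_derivative_at_within)
  moreover have "P b - P (-1) = 2 / s * (g (segpt u \<xi> b) * ((1 + b) / 2) - (G (segpt u \<xi> b) - G u) / s)"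
    unfolding P_def using s by (simp add: field_simps)
  ultimately show ?thesis by (simp add: s_def)
qed

lemma has_real_derivative_seg_moment:
  assumes g: "\<And>x. x \<in> {0<..<1} \<Longrightarrow> (g has_real_derivative g' x) (at x)"
    and cg': "continuous_on {0<..<1} g'"
    and u: "u \<in> {0<..<1}" and \<xi>: "\<xi> \<in> {0<..<1}"
  shows "(seg_moment g k u has_real_derivative seg_moment g' (Suc k) u \<xi>) (at \<xi>)"
proof -
  have cg: "continuous_on {0<..<1} g"
    using g by (meson DERIV_continuous continuous_at_imp_continuous_on)
  have "((\<lambda>x. integral (cbox (-1) 1) (\<lambda>\<mu>. g (segpt u x \<mu>) * seg_weight k \<mu>)) has_field_derivative
      integral (cbox (-1) 1) (\<lambda>\<mu>. g' (segpt u \<xi> \<mu>) * seg_weight (Suc k) \<mu>)) (at \<xi> within {0<..<1})"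
  proof (rule leibniz_rule_field_derivative)
    fix x t :: real assume x: "x \<in> {0<..<1}" and t: "t \<in> cbox (-1) 1"
    have a: "segpt u x t \<in> {0<..<1}" using segpt_in_01 t x u by auto
    have da: "((\<lambda>x. segpt u x t) has_real_derivative (1 + t) / 2) (at x)"
      unfolding segpt_def by (auto intro!: derivative_eq_intros)
    from DERIV_chain2[OF g[OF a] da]
    have "((\<lambda>x. g (segpt u x t)) has_real_derivative g' (segpt u x t) * ((1 + t) / 2)) (at x)" .
    then have "((\<lambda>x. g (segpt u x t) * seg_weight k t) has_real_derivative
        g' (segpt u x t) * seg_weight (Suc k) t) (at x)"
      by (rule DERIV_cong[OF DERIV_cmult_right]) (simp add: seg_weight_Suc)
    then show "((\<lambda>x. g (segpt u x t) * seg_weight k t) has_real_derivative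
        g' (segpt u x t) * seg_weight (Suc k) t) (at x within {0<..<1})"
      by (rule has_field_derivative_at_within)
  next
    fix x :: real assume "x \<in> {0<..<1}"
    then show "(\<lambda>\<mu>. g (segpt u x \<mu>) * seg_weight k \<mu>) integrable_on cbox (-1) 1"
      using integrable_seg_integrand[OF cg u] by simp
  next
    have "continuous_on ({0<..<1} \<times> {-1..1}) (\<lambda>(x, t). segpt u x t)"
      unfolding segpt_def split_beta by (intro continuous_intros) auto
    moreover have "(\<lambda>(x, t). segpt u x t) ` ({0<..<1} \<times> {-1..1}) \<subseteq> {0<..<1}"
      using segpt_in_01 u by auto
    ultimately have "continuous_on ({0<..<1} \<times> {-1..1}) (\<lambda>z. g' (segpt u (fst z) (snd z)))"
      using continuous_on_compose2[OF cg'] by (simp add: split_beta)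
    then show "continuous_on ({0<..<1} \<times> cbox (-1) 1)
        (\<lambda>(x, t). g' (segpt u x t) * seg_weight (Suc k) t)"
      unfolding seg_weight_def by (auto simp: split_beta intro!: continuous_intros)
  qed (use \<xi> in auto)
  then show ?thesis
    unfolding seg_moment_def[abs_def] using at_within_open[OF \<xi>] by simp
qed

lemma seg_moment_neg:
  assumes "continuous_on {0<..<1} g" "\<And>x. x \<in> {0<..<1} \<Longrightarrow> g x < 0"
    and u: "u \<in> {0<..<1}" and \<xi>: "\<xi> \<in> {0<..<1}"
  shows "seg_moment g 0 u \<xi> < 0"
proof -
  define S where "S = {min u \<xi>..max u \<xi>}"
  have S: "S \<subseteq> {0<..<1}" using u \<xi> by (auto simp: S_def)
  have "\<exists>m\<in>S. \<forall>y\<in>S. g y \<le> g m"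
    by (rule continuous_attains_sup) (use continuous_on_subset[OF assms(1) S] in \<open>auto simp: S_def\<close>)
  then obtain m where m: "m \<in> S" "\<And>y. y \<in> S \<Longrightarrow> g y \<le> g m" by blast
  have gm: "g m < 0" using assms(2) S m(1) by auto
  note int = integrable_seg_integrand[OF assms(1) u \<xi>, of _ _ 0]
  have "integral {-1..0} (\<lambda>\<mu>. g (segpt u \<xi> \<mu>) * seg_weight 0 \<mu>) \<le> integral {-1..0} (\<lambda>_::real. g m)"
  proof (rule integral_le)
    fix \<mu> :: real assume \<mu>: "\<mu> \<in> {-1..0}"
    then have "segpt u \<xi> \<mu> \<in> S" using segpt_between[of \<mu> u \<xi>] by (auto simp: S_def)
    then have le: "g (segpt u \<xi> \<mu>) \<le> g m" by (rule m(2))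
    have "g (segpt u \<xi> \<mu>) * sqrt (1 - \<mu>) \<le> g (segpt u \<xi> \<mu>) * 1"
      using le gm \<mu> by (intro mult_left_mono_neg) auto
    then show "g (segpt u \<xi> \<mu>) * seg_weight 0 \<mu> \<le> g m" using le by (simp add: seg_weight_def)
  qed (use int in auto)
  moreover have "integral {0..1} (\<lambda>\<mu>. g (segpt u \<xi> \<mu>) * seg_weight 0 \<mu>) \<le> 2 * (1 - 0) * 0"
    by (rule integral_seg_le[OF assms(1) u \<xi>])
      (use assms(2) segpt_in_01 u \<xi> in \<open>auto simp: less_imp_le\<close>)
  moreover have "seg_moment g 0 u \<xi> = integral {-1..0} (\<lambda>\<mu>. g (segpt u \<xi> \<mu>) * seg_weight 0 \<mu>)
      + integral {0..1} (\<lambda>\<mu>. g (segpt u \<xi> \<mu>) * seg_weight 0 \<mu>)"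
    unfolding seg_moment_def
    by (rule Henstock_Kurzweil_Integration.integral_combine[symmetric]) (use int in auto)
  ultimately show ?thesis using gm by simp
qed

lemma seg_moment_nonneg:
  assumes "continuous_on {0<..<1} g" "u \<in> {0<..<1}" "\<xi> \<in> {0<..<1}"
    and "\<And>x. x \<in> {min u \<xi>..max u \<xi>} \<Longrightarrow> 0 \<le> g x"
  shows "0 \<le> seg_moment g k u \<xi>"
proof -
  have "- (2 * (1 - -1) * 0) \<le> seg_moment g k u \<xi>"
    unfolding seg_moment_def
    by (rule integral_seg_ge[OF assms(1-3)]) (use segpt_between assms(4) in auto)
  then show ?thesis by simp
qed

lemma integral_seg_le_of_nonpos:
  assumes "continuous_on {0<..<1} g" "u \<in> {0<..<1}" "\<xi> \<in> {0<..<1}" "0 \<le> a" "a \<le> b" "b \<le> 1"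
    and "\<And>\<mu>. \<mu> \<in> {a..b} \<Longrightarrow> g (segpt u \<xi> \<mu>) \<le> 0"
    and "(\<lambda>\<mu>. g (segpt u \<xi> \<mu>)) integrable_on {a..b}"
  shows "integral {a..b} (\<lambda>\<mu>. g (segpt u \<xi> \<mu>) * seg_weight k \<mu>)
           \<le> (1 / 2) ^ k * sqrt (1 - b) * integral {a..b} (\<lambda>\<mu>. g (segpt u \<xi> \<mu>))"
proof -
  have "integral {a..b} (\<lambda>\<mu>. g (segpt u \<xi> \<mu>) * seg_weight k \<mu>)
      \<le> integral {a..b} (\<lambda>\<mu>. (1 / 2) ^ k * sqrt (1 - b) * g (segpt u \<xi> \<mu>))"
  proof (rule integral_le)
    fix \<mu> assume \<mu>: "\<mu> \<in> {a..b}"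
    have "g (segpt u \<xi> \<mu>) * seg_weight k \<mu> \<le> g (segpt u \<xi> \<mu>) * ((1 / 2) ^ k * sqrt (1 - b))"
      using assms(4-7) \<mu> seg_weight_ge[of a \<mu> b k] by (intro mult_left_mono_neg) auto
    then show "g (segpt u \<xi> \<mu>) * seg_weight k \<mu> \<le> (1 / 2) ^ k * sqrt (1 - b) * g (segpt u \<xi> \<mu>)"
      by (simp add: mult.commute)
  next
    show "(\<lambda>\<mu>. g (segpt u \<xi> \<mu>) * seg_weight k \<mu>) integrable_on {a..b}"
      by (rule integrable_seg_integrand[OF assms(1-3)]) (use assms(4-6) in auto)
    show "(\<lambda>\<mu>. (1 / 2) ^ k * sqrt (1 - b) * g (segpt u \<xi> \<mu>)) integrable_on {a..b}"
      by (rule integrable_on_mult_right[OF assms(8)])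
  qed
  then show ?thesis by simp
qed

lemma integral_seg_tail_le:
  assumes G: "\<And>x. x \<in> {0<..<1} \<Longrightarrow> (G has_real_derivative g x) (at x)"
    and cg: "continuous_on {0<..<1} g"
    and "0 < u" "u + 1 / 2 \<le> v" "v < t" "(1 + t) / 2 \<le> \<xi>" "\<xi> < 1"
    and nonpos: "\<And>x. x \<in> {v..<1} \<Longrightarrow> g x \<le> 0"
  shows "integral {segpar u \<xi> v..1} (\<lambda>\<mu>. g (segpt u \<xi> \<mu>) * seg_weight k \<mu>)
           \<le> (1 / 2) ^ k * sqrt (1 - t) * (G t - G v)"
proof -
  define s where "s = \<xi> - u"
  define mv where "mv = segpar u \<xi> v"
  define mt where "mt = segpar u \<xi> t"
  have us: "u < \<xi>" "\<xi> - u \<le> 1" and u: "u \<in> {0<..<1}" and \<xi>: "\<xi> \<in> {0<..<1}"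
    and vt\<xi>: "v < t" "t < \<xi>" using assms(3-7) by auto
  have mv0: "0 \<le> mv" using segpar_stretch(1)[OF us, of v] assms(3,4) by (simp add: mv_def)
  have mvt: "mv \<le> mt" unfolding mv_def mt_def using us(1) vt\<xi> by (intro segpar_mono) auto
  have mt1: "mt \<le> 1" unfolding mt_def using us vt\<xi> by (intro segpar_le_one) auto
  have g_nonpos: "g (segpt u \<xi> \<mu>) \<le> 0" if "\<mu> \<in> {mv..1}" for \<mu>
  proof -
    have "segpt u \<xi> \<mu> \<in> {v..\<xi>}"
      using segpt_mem_segpar_interval[OF us(1), of \<mu> v \<xi>] that us by (simp add: mv_def)
    then show ?thesis using nonpos vt\<xi> assms(7) by auto
  qed
  let ?F = "\<lambda>\<mu>. g (segpt u \<xi> \<mu>) * seg_weight k \<mu>"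
  have "integral {mt..1} ?F \<le> 2 * (1 - mt) * 0"
    by (rule integral_seg_le[OF cg u \<xi>]) (use g_nonpos mv0 mvt mt1 in auto)
  moreover have "integral {mv..1} ?F = integral {mv..mt} ?F + integral {mt..1} ?F"
    by (rule Henstock_Kurzweil_Integration.integral_combine[symmetric])
      (use mv0 mvt mt1 integrable_seg_integrand[OF cg u \<xi>] in auto)
  moreover have ftc: "((\<lambda>\<mu>. g (segpt u \<xi> \<mu>)) has_integral 2 / s * (G t - G v)) {mv..mt}"
    using has_integral_seg_deriv[OF G u \<xi> _ _ mvt mt1] us mv0 by (simp add: mv_def mt_def s_def)
  moreover have "integral {mv..mt} ?F \<le> (1 / 2) ^ k * sqrt (1 - mt) * (2 / s * (G t - G v))"
    using integral_seg_le_of_nonpos[OF cg u \<xi> mv0 mvt mt1 _ has_integral_integrable[OF ftc]]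
      integral_unique[OF ftc] g_nonpos mt1 by simp
  moreover have "(1 / 2) ^ k * sqrt (1 - mt) * (2 / s * (G t - G v))
      \<le> (1 / 2) ^ k * sqrt (1 - t) * (G t - G v)"
  proof -
    have "2 / s * (G t - G v) \<le> 0"
      using has_integral_le[OF ftc has_integral_0] g_nonpos mt1 by auto
    then have dG: "G t - G v \<le> 0" using us by (simp add: s_def divide_le_0_iff)
    have "1 - t \<le> 1 - mt" using segpar_stretch(2)[OF us, of t] assms(6) vt\<xi> by (simp add: mt_def)
    then have "sqrt (1 - t) \<le> sqrt (1 - mt) * 1" by simp
    also have "\<dots> \<le> sqrt (1 - mt) * (2 / s)"
      using us mt1 by (intro mult_left_mono) (auto simp: s_def le_divide_eq)
    finally have "sqrt (1 - mt) * (2 / s) * (G t - G v) \<le> sqrt (1 - t) * (G t - G v)"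
      using dG by (rule mult_right_mono_neg)
    then have "(1 / 2) ^ k * (sqrt (1 - mt) * (2 / s) * (G t - G v))
        \<le> (1 / 2) ^ k * (sqrt (1 - t) * (G t - G v))"
      by (rule mult_left_mono) simp
    then show ?thesis by (simp only: mult.assoc)
  qed
  ultimately show ?thesis unfolding mv_def[symmetric] by linarith
qed

text \<open>The factor sqrt (1 - t) is what lets a blow-up of G near 1 dominate the bounded part.\<close>
lemma seg_moment_tail_le:
  assumes G: "\<And>x. x \<in> {0<..<1} \<Longrightarrow> (G has_real_derivative g x) (at x)"
    and cg: "continuous_on {0<..<1} g"
    and "0 < u" "u + 1 / 2 \<le> v" "v < t" "(1 + t) / 2 \<le> \<xi>" "\<xi> < 1"
    and M: "0 \<le> M" "\<And>x. x \<in> {u..v} \<Longrightarrow> g x \<le> M"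
    and nonpos: "\<And>x. x \<in> {v..<1} \<Longrightarrow> g x \<le> 0"
  shows "seg_moment g k u \<xi> \<le> 4 * M + (1 / 2) ^ k * sqrt (1 - t) * (G t - G v)"
proof -
  define mv where "mv = segpar u \<xi> v"
  have us: "u < \<xi>" "\<xi> - u \<le> 1" and u: "u \<in> {0<..<1}" and \<xi>: "\<xi> \<in> {0<..<1}"
    using assms(3-7) by auto
  have mv: "-1 \<le> mv" "mv \<le> 1"
    unfolding mv_def using us(1) assms(3-7) by (auto intro!: segpar_ge_minus_one segpar_le_one)
  let ?F = "\<lambda>\<mu>. g (segpt u \<xi> \<mu>) * seg_weight k \<mu>"
  have "integral {-1..mv} ?F \<le> 2 * (mv - -1) * M"
  proof (rule integral_seg_le[OF cg u \<xi> _ _ _ M(1)])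
    fix \<mu> assume "\<mu> \<in> {-1..mv}"
    then have "segpt u \<xi> \<mu> \<in> {u..v}"
      using segpt_mem_segpar_interval[OF us(1), of \<mu> u v] us by (simp add: mv_def)
    then show "g (segpt u \<xi> \<mu>) \<le> M" by (rule M(2))
  qed (use mv in auto)
  also have "\<dots> \<le> 4 * M" using mv M(1) mult_right_mono[of "mv + 1" 2 M] by (simp add: algebra_simps)
  finally have "integral {-1..mv} ?F \<le> 4 * M" .
  moreover have "seg_moment g k u \<xi> = integral {-1..mv} ?F + integral {mv..1} ?F"
    unfolding seg_moment_def
    by (rule Henstock_Kurzweil_Integration.integral_combine[symmetric])
      (use mv integrable_seg_integrand[OF cg u \<xi>] in auto)
  ultimately show ?thesis
    using integral_seg_tail_le[OF G cg assms(3-7) nonpos, of k] by (simp add: mv_def)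
qed

lemma integral_seg_ge_of_nonneg:
  assumes "continuous_on {0<..<1} g" "u \<in> {0<..<1}" "\<xi> \<in> {0<..<1}" "-1 \<le> a" "a \<le> b" "b \<le> 1"
    and "\<And>\<mu>. \<mu> \<in> {a..b} \<Longrightarrow> 0 \<le> g (segpt u \<xi> \<mu>)"
    and "(\<lambda>\<mu>. g (segpt u \<xi> \<mu>) * ((1 + \<mu>) / 2) ^ k) integrable_on {a..b}"
  shows "sqrt (1 - b) * integral {a..b} (\<lambda>\<mu>. g (segpt u \<xi> \<mu>) * ((1 + \<mu>) / 2) ^ k)
           \<le> integral {a..b} (\<lambda>\<mu>. g (segpt u \<xi> \<mu>) * seg_weight k \<mu>)"
proof -
  have "integral {a..b} (\<lambda>\<mu>. sqrt (1 - b) * (g (segpt u \<xi> \<mu>) * ((1 + \<mu>) / 2) ^ k))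
      \<le> integral {a..b} (\<lambda>\<mu>. g (segpt u \<xi> \<mu>) * seg_weight k \<mu>)"
  proof (rule integral_le)
    fix \<mu> assume \<mu>: "\<mu> \<in> {a..b}"
    then have "0 \<le> g (segpt u \<xi> \<mu>) * ((1 + \<mu>) / 2) ^ k" using assms(4,7) by simp
    then have "sqrt (1 - b) * (g (segpt u \<xi> \<mu>) * ((1 + \<mu>) / 2) ^ k)
        \<le> sqrt (1 - \<mu>) * (g (segpt u \<xi> \<mu>) * ((1 + \<mu>) / 2) ^ k)"
      using \<mu> by (intro mult_right_mono) auto
    then show "sqrt (1 - b) * (g (segpt u \<xi> \<mu>) * ((1 + \<mu>) / 2) ^ k) \<le> g (segpt u \<xi> \<mu>) * seg_weight k \<mu>"
      by (simp add: seg_weight_def mult_ac)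
  next
    show "(\<lambda>\<mu>. sqrt (1 - b) * (g (segpt u \<xi> \<mu>) * ((1 + \<mu>) / 2) ^ k)) integrable_on {a..b}"
      by (rule integrable_on_mult_right[OF assms(8)])
    show "(\<lambda>\<mu>. g (segpt u \<xi> \<mu>) * seg_weight k \<mu>) integrable_on {a..b}"
      by (rule integrable_seg_integrand[OF assms(1-3)]) (use assms(4-6) in auto)
  qed
  then show ?thesis by simp
qed

lemma integral_seg_initial_ge:
  assumes G: "\<And>x. x \<in> {0<..<1} \<Longrightarrow> (G has_real_derivative g x) (at x)"
    and g: "\<And>x. x \<in> {0<..<1} \<Longrightarrow> (g has_real_derivative h x) (at x)"
    and ch: "continuous_on {0<..<1} h"
    and "0 < u" "u < v" "v < \<xi>" "\<xi> < 1" and h: "\<And>x. x \<in> {u..v} \<Longrightarrow> 0 \<le> h x"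
    and T: "0 \<le> T" "T \<le> G u - G v - \<bar>g v\<bar>"
  shows "2 * sqrt (2 * (\<xi> - v)) * T \<le> integral {-1..segpar u \<xi> v} (\<lambda>\<mu>. h (segpt u \<xi> \<mu>) * seg_weight 1 \<mu>)"
proof -
  define s where "s = \<xi> - u"
  define m where "m = segpar u \<xi> v"
  define B where "B = g v * ((1 + m) / 2) + (G u - G v) / s"
  have us: "u < \<xi>" "\<xi> - u \<le> 1" and u: "u \<in> {0<..<1}" and \<xi>: "\<xi> \<in> {0<..<1}"
    using assms(4-7) by auto
  have m: "-1 \<le> m" "m \<le> 1"
    unfolding m_def using us(1) assms(5,6) by (auto intro: segpar_ge_minus_one segpar_le_one)
  have ftc: "((\<lambda>\<mu>. h (segpt u \<xi> \<mu>) * ((1 + \<mu>) / 2) ^ 1) has_integral 2 / s * B) {-1..m}"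
    using has_integral_seg_second_deriv[OF G g u \<xi> _ m] us by (simp add: m_def s_def B_def field_simps)
  have "T \<le> B"
  proof -
    have "G u - G v \<le> (G u - G v) / s" using us T by (simp add: s_def le_divide_eq mult_left_le)
    moreover have "\<bar>g v * ((1 + m) / 2)\<bar> \<le> \<bar>g v\<bar> * 1"
      unfolding abs_mult using m by (intro mult_left_mono) auto
    ultimately show ?thesis using T abs_ge_minus_self[of "g v * ((1 + m) / 2)"] by (simp add: B_def)
  qed
  then have two: "2 * T \<le> 2 / s * B" using T us by (intro mult_mono) (auto simp: s_def le_divide_eq)
  have sq: "sqrt (2 * (\<xi> - v)) \<le> sqrt (1 - m)"
    using segpar_stretch(2)[OF us, of v] assms(6) by (simp add: m_def)
  have "sqrt (2 * (\<xi> - v)) * (2 * T) \<le> sqrt (1 - m) * (2 / s * B)"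
    by (rule mult_mono[OF sq two]) (use T m in auto)
  also have "\<dots> \<le> integral {-1..m} (\<lambda>\<mu>. h (segpt u \<xi> \<mu>) * seg_weight 1 \<mu>)"
  proof -
    have "0 \<le> h (segpt u \<xi> \<mu>)" if "\<mu> \<in> {-1..m}" for \<mu>
      using segpt_mem_segpar_interval[OF us(1), of \<mu> u v] that us h by (simp add: m_def)
    from integral_seg_ge_of_nonneg[OF ch u \<xi> order.refl m this has_integral_integrable[OF ftc]]
    show ?thesis unfolding integral_unique[OF ftc] .
  qed
  finally show ?thesis by (simp add: m_def mult_ac)
qed

lemma seg_moment_ge:
  assumes G: "\<And>x. x \<in> {0<..<1} \<Longrightarrow> (G has_real_derivative g x) (at x)"
    and g: "\<And>x. x \<in> {0<..<1} \<Longrightarrow> (g has_real_derivative h x) (at x)"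
    and ch: "continuous_on {0<..<1} h"
    and "0 < u" "u < v" "v < \<xi>" "\<xi> < 1" and h: "\<And>x. x \<in> {u..v} \<Longrightarrow> 0 \<le> h x"
    and M: "0 \<le> M" "\<And>x. x \<in> {v..\<xi>} \<Longrightarrow> - M \<le> h x"
    and T: "0 \<le> T" "T \<le> G u - G v - \<bar>g v\<bar>"
  shows "2 * sqrt (2 * (\<xi> - v)) * T - 4 * M \<le> seg_moment h 1 u \<xi>"
proof -
  define m where "m = segpar u \<xi> v"
  have us: "u < \<xi>" and u: "u \<in> {0<..<1}" and \<xi>: "\<xi> \<in> {0<..<1}" using assms(4-7) by auto
  have m: "-1 \<le> m" "m \<le> 1"
    unfolding m_def using us(1) assms(5,6) by (auto intro: segpar_ge_minus_one segpar_le_one)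
  let ?F = "\<lambda>\<mu>. h (segpt u \<xi> \<mu>) * seg_weight 1 \<mu>"
  have "- (2 * (1 - m) * M) \<le> integral {m..1} ?F"
  proof (rule integral_seg_ge[OF ch u \<xi> _ _ _ M(1)])
    fix \<mu> assume "\<mu> \<in> {m..1}"
    then have "segpt u \<xi> \<mu> \<in> {v..\<xi>}"
      using segpt_mem_segpar_interval[OF us, of \<mu> v \<xi>] us by (simp add: m_def)
    then show "- M \<le> h (segpt u \<xi> \<mu>)" by (rule M(2))
  qed (use m in auto)
  moreover have "2 * (1 - m) * M \<le> 4 * M"
    using m M(1) mult_right_mono[of "1 - m" 2 M] by (simp add: algebra_simps)
  moreover have "seg_moment h 1 u \<xi> = integral {-1..m} ?F + integral {m..1} ?F"
    unfolding seg_moment_def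
    by (rule Henstock_Kurzweil_Integration.integral_combine[symmetric])
      (use m integrable_seg_integrand[OF ch u \<xi>] in auto)
  ultimately show ?thesis using integral_seg_initial_ge[OF G g ch assms(4-7) h T] by (simp add: m_def)
qed

section \<open>Blow-up and sign changes of real functions\<close>

lemma ge_of_deriv_ge_neg_inv_sqrt:
  assumes deriv: "\<And>x. x \<in> {r..<1} \<Longrightarrow> (g has_real_derivative g' x) (at x)"
    and bound: "\<And>x. x \<in> {r..<1} \<Longrightarrow> - K / sqrt (1 - x) \<le> g' x"
    and "0 \<le> K" "t \<in> {r..<1}"
  shows "g r - 2 * K * sqrt (1 - r) \<le> g t"
proof -
  have "g r - 2 * K * sqrt (1 - r) \<le> g t - 2 * K * sqrt (1 - t)"
  proof (rule DERIV_nonneg_imp_nondecreasing[of r t "\<lambda>x. g x - 2 * K * sqrt (1 - x)"])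
    fix x assume "r \<le> x" "x \<le> t"
    then have x: "x \<in> {r..<1}" using assms(4) by auto
    have "((\<lambda>x. g x - 2 * K * sqrt (1 - x)) has_real_derivative g' x + K / sqrt (1 - x)) (at x)"
      using x by (auto intro!: derivative_eq_intros deriv simp: field_simps)
    moreover have "0 \<le> g' x + K / sqrt (1 - x)" using bound[OF x] by simp
    ultimately show "\<exists>y. ((\<lambda>x. g x - 2 * K * sqrt (1 - x)) has_real_derivative y) (at x) \<and> 0 \<le> y"
      by blast
  qed (use assms(4) in auto)
  moreover have "0 \<le> 2 * K * sqrt (1 - t)" using assms(3,4) by simp
  ultimately show ?thesis by linarith
qed

text \<open>Were sqrt (1 - t) |g' t| bounded near 1, g would be bounded below there, because
  1 / sqrt (1 - t) is integrable up to 1.\<close>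
lemma weighted_deriv_unbounded_near_1:
  assumes deriv: "\<And>x. x \<in> {0<..<1} \<Longrightarrow> (g has_real_derivative g' x) (at x)"
    and unbdd: "\<And>r B. r < 1 \<Longrightarrow> \<exists>t\<in>{r<..<1}. g t < B"
    and "r < 1"
  shows "\<exists>t\<in>{r<..<1}. K \<le> sqrt (1 - t) * - g' t"
proof (rule ccontr)
  assume "\<not> ?thesis"
  then have small: "sqrt (1 - t) * - g' t < K" if "t \<in> {r<..<1}" for t
    using that by force
  define r' where "r' = (max r 0 + 1) / 2"
  have r': "r < r'" "0 < r'" "r' < 1" using assms(3) by (auto simp: r'_def)
  have bound: "- max K 0 / sqrt (1 - x) \<le> g' x" if "x \<in> {r'..<1}" for x
  proof -
    have "sqrt (1 - x) * - g' x \<le> max K 0" using small[of x] that r' by force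
    then show ?thesis using that by (simp add: field_simps)
  qed
  have lower: "g r' - 2 * max K 0 * sqrt (1 - r') \<le> g t" if "t \<in> {r'..<1}" for t
    by (rule ge_of_deriv_ge_neg_inv_sqrt[of r' g g']) (use deriv bound r' that in auto)
  obtain t where "t \<in> {r'<..<1}" "g t < g r' - 2 * max K 0 * sqrt (1 - r')"
    using unbdd[OF r'(3)] by blast
  with lower[of t] show False by auto
qed

lemma unbounded_of_weighted_unbounded_near_1:
  assumes weighted: "\<And>r K. r < 1 \<Longrightarrow> \<exists>t\<in>{r<..<1}. K \<le> sqrt (1 - t) * - h t"
    and "r < 1"
  shows "\<exists>t\<in>{r<..<1}. h t < B"
proof -
  obtain t where t: "t \<in> {max r 0<..<1}" and K: "\<bar>B\<bar> + 1 \<le> sqrt (1 - t) * - h t"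
    using weighted[of "max r 0" "\<bar>B\<bar> + 1"] assms(2) by auto
  have s: "sqrt (1 - t) \<le> 1" "0 < sqrt (1 - t)" using t by auto
  have "0 < sqrt (1 - t) * - h t" using K abs_ge_zero[of B] by linarith
  then have "0 \<le> - h t" using zero_less_mult_pos[OF _ s(2)] less_imp_le by blast
  then have "sqrt (1 - t) * - h t \<le> 1 * - h t" using s(1) by (intro mult_right_mono)
  with K have "\<bar>B\<bar> + 1 \<le> - h t" by simp
  then have "h t < B" by linarith
  then show ?thesis using t by auto
qed

lemma deriv_unbounded_near_0:
  assumes deriv: "\<And>x. x \<in> {0<..<1} \<Longrightarrow> (g has_real_derivative g' x) (at x)"
    and lim: "filterlim g at_top (at_right 0)" and "0 < d"
  shows "\<exists>x\<in>{0<..<d}. g' x < B"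
proof (rule ccontr)
  assume "\<not> ?thesis"
  then have big: "B \<le> g' x" if "x \<in> {0<..<d}" for x using that by force
  define y where "y = min d 1 / 2"
  have y: "0 < y" "y < d" "y < 1" using assms(3) by (auto simp: y_def)
  have upper: "g x \<le> g y + \<bar>B\<bar>" if x: "x \<in> {0<..y}" for x
  proof -
    have "g x - B * x \<le> g y - B * y"
    proof (rule DERIV_nonneg_imp_nondecreasing[of x y])
      fix z assume "x \<le> z" "z \<le> y"
      then have z: "z \<in> {0<..<1}" "z \<in> {0<..<d}" using x y by auto
      show "\<exists>l. ((\<lambda>x. g x - B * x) has_real_derivative l) (at z) \<and> 0 \<le> l"
        using big[OF z(2)] by (auto intro!: derivative_eq_intros deriv[OF z(1)])
    qed (use x in auto)
    moreover have "- B * (y - x) \<le> \<bar>B\<bar> * (y - x)" using x by (intro mult_right_mono) auto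
    moreover have "\<bar>B\<bar> * (y - x) \<le> \<bar>B\<bar>" using x y by (intro mult_left_le) auto
    ultimately show ?thesis by (simp add: algebra_simps)
  qed
  have "\<forall>\<^sub>F x in at_right 0. g y + \<bar>B\<bar> < g x \<and> x \<in> {0<..y}"
    using lim eventually_at_right_real[OF y(1)] by (auto simp: filterlim_at_top_dense elim: eventually_elim2)
  then obtain x where "g y + \<bar>B\<bar> < g x" "x \<in> {0<..y}"
    using eventually_happens trivial_limit_at_right_real by blast
  with upper[of x] show False by simp
qed

lemma min_of_deriv_sign:
  fixes \<phi> \<phi>' :: "real \<Rightarrow> real"
  assumes deriv: "\<And>x. x \<in> {a<..<b} \<Longrightarrow> (\<phi> has_real_derivative \<phi>' x) (at x)"
    and "c \<in> {a<..<b}" "\<And>x. x \<in> {a<..c} \<Longrightarrow> \<phi>' x \<le> 0" "\<And>x. x \<in> {c..<b} \<Longrightarrow> 0 \<le> \<phi>' x"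
    and y: "y \<in> {a<..<b}"
  shows "\<phi> c \<le> \<phi> y"
proof (cases "y \<le> c")
  case True
  show ?thesis
  proof (rule DERIV_nonpos_imp_nonincreasing[OF True])
    fix x assume "y \<le> x" "x \<le> c"
    then have "x \<in> {a<..<b}" "x \<in> {a<..c}" using y assms(2) by auto
    then show "\<exists>l. (\<phi> has_real_derivative l) (at x) \<and> l \<le> 0" using deriv assms(3) by blast
  qed
next
  case False
  show ?thesis
  proof (rule DERIV_nonneg_imp_nondecreasing[of c y])
    fix x assume "c \<le> x" "x \<le> y"
    then have "x \<in> {a<..<b}" "x \<in> {c..<b}" using y assms(2) by auto
    then show "\<exists>l. (\<phi> has_real_derivative l) (at x) \<and> 0 \<le> l" using deriv assms(4) by blast
  qed (use False in simp)
qed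

lemma unique_min_of_deriv_sign:
  fixes \<phi> \<phi>' :: "real \<Rightarrow> real"
  assumes deriv: "\<And>x. x \<in> {a<..<b} \<Longrightarrow> (\<phi> has_real_derivative \<phi>' x) (at x)"
    and c: "c \<in> {a<..<b}" and neg: "\<And>x. x \<in> {a<..<c} \<Longrightarrow> \<phi>' x < 0"
    and zero: "\<phi>' c = 0" and pos: "\<And>x. x \<in> {c<..<b} \<Longrightarrow> 0 < \<phi>' x"
  shows "\<forall>x\<in>{a<..<b}. (\<phi> has_real_derivative 0) (at x) \<longrightarrow> x = c"
    and "\<forall>y\<in>{a<..<b}. \<phi> c \<le> \<phi> y"
    and "\<forall>x\<in>{a<..<b}. (\<forall>y\<in>{a<..<b}. \<phi> x \<le> \<phi> y) \<longrightarrow> x = c"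
proof -
  have critical: "x = c" if x: "x \<in> {a<..<b}" and "\<phi>' x = 0" for x
  proof -
    have "\<not> x < c" using neg[of x] that by auto
    moreover have "\<not> c < x" using pos[of x] that by auto
    ultimately show "x = c" by simp
  qed
  show "\<forall>x\<in>{a<..<b}. (\<phi> has_real_derivative 0) (at x) \<longrightarrow> x = c"
  proof (intro ballI impI)
    fix x assume x: "x \<in> {a<..<b}" and "(\<phi> has_real_derivative 0) (at x)"
    then have "\<phi>' x = 0" using DERIV_unique[OF deriv[OF x]] by blast
    then show "x = c" by (rule critical[OF x])
  qed
  have "\<phi>' x \<le> 0" if "x \<in> {a<..c}" for x
    using neg[of x] zero that by (cases "x = c") auto
  moreover have "0 \<le> \<phi>' x" if "x \<in> {c..<b}" for x
    using pos[of x] zero that by (cases "x = c") auto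
  ultimately show "\<forall>y\<in>{a<..<b}. \<phi> c \<le> \<phi> y"
    using min_of_deriv_sign[OF deriv c] by blast
  show "\<forall>x\<in>{a<..<b}. (\<forall>y\<in>{a<..<b}. \<phi> x \<le> \<phi> y) \<longrightarrow> x = c"
  proof (intro ballI impI)
    fix x assume x: "x \<in> {a<..<b}" and min: "\<forall>y\<in>{a<..<b}. \<phi> x \<le> \<phi> y"
    have "\<phi>' x = 0"
    proof (rule DERIV_local_min[OF deriv[OF x]])
      show "0 < min (x - a) (b - x)" using x by auto
      show "\<forall>y. \<bar>x - y\<bar> < min (x - a) (b - x) \<longrightarrow> \<phi> x \<le> \<phi> y"
        using min by (auto simp: abs_less_iff)
    qed
    then show "x = c" by (rule critical[OF x])
  qed
qed

lemma sign_change_of_decreasing: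
  fixes H H' :: "real \<Rightarrow> real"
  assumes deriv: "\<And>x. x \<in> {a<..<b} \<Longrightarrow> (H has_real_derivative H' x) (at x)"
    and x0: "a < x0" and dec: "\<And>x. x \<in> {x0..<b} \<Longrightarrow> H' x < 0"
    and pos: "\<And>x. x \<in> {a<..x0} \<Longrightarrow> 0 < H x"
    and x1: "x1 \<in> {x0<..<b}" "H x1 < 0"
  shows "\<exists>c\<in>{a<..<b}. (\<forall>x\<in>{a<..<c}. 0 < H x) \<and> H c = 0 \<and> (\<forall>x\<in>{c<..<b}. H x < 0)"
proof -
  have less: "H y < H x" if "x0 \<le> x" "x < y" "y < b" for x y
  proof (rule DERIV_neg_imp_decreasing[OF that(2)])
    fix z assume "x \<le> z" "z \<le> y"
    then have "z \<in> {a<..<b}" "z \<in> {x0..<b}" using that x0 by auto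
    then show "\<exists>l. (H has_real_derivative l) (at z) \<and> l < 0" using deriv dec by blast
  qed
  have "continuous_on {x0..x1} H"
    by (intro continuous_at_imp_continuous_on ballI DERIV_isCont[OF deriv]) (use x0 x1 in auto)
  then obtain c where c: "x0 \<le> c" "c \<le> x1" "H c = 0"
    using IVT2'[where f = H and a = x0 and b = x1 and y = 0] pos[of x0] x0 x1 by auto
  have "c \<noteq> x0" using pos[of x0] x0 c(3) by auto
  then have c0: "x0 < c" using c(1) by simp
  show ?thesis
  proof (intro bexI conjI ballI)
    fix x assume "x \<in> {a<..<c}"
    then show "0 < H x" using pos[of x] less[of x c] c x1 by (cases "x \<le> x0") auto
  next
    fix x assume "x \<in> {c<..<b}"
    then show "H x < 0" using less[of c x] c c0 by auto
  qed (use c c0 x0 x1 in auto)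
qed

lemma sqrt_one_minus_mult_le_abs:
  assumes "t \<in> {0..1}"
  shows "sqrt (1 - t) * a \<le> \<bar>a\<bar>"
proof -
  have "sqrt (1 - t) * a \<le> sqrt (1 - t) * \<bar>a\<bar>" using assms by (intro mult_left_mono) auto
  also have "\<dots> \<le> 1 * \<bar>a\<bar>" using assms by (intro mult_right_mono) auto
  finally show ?thesis by simp
qed

section \<open>The objective under the standing assumptions\<close>

definition J0_deriv_numer :: "(real \<Rightarrow> real) \<Rightarrow> real \<Rightarrow> real \<Rightarrow> real" where
  "J0_deriv_numer f u \<xi> = seg_moment (deriv (deriv f)) 1 u \<xi> * V0 \<xi> u - 4 / 15 * seg_moment (deriv f) 0 u \<xi>"

lemma J0_eq: "J0 f u \<xi> = - seg_moment (deriv f) 0 u \<xi> / (4 * sqrt 2 * V0 \<xi> u)"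
  unfolding J0_def G0_def seg_moment_def seg_weight_def segpt_def by simp

lemma V0_pos: "0 < \<xi> \<Longrightarrow> 0 < u \<Longrightarrow> 0 < V0 \<xi> u"
  unfolding V0_def by simp

lemma V0_le_one: "\<xi> \<le> 1 \<Longrightarrow> u \<le> 1 \<Longrightarrow> V0 \<xi> u \<le> 1"
  unfolding V0_def by simp

lemma has_real_derivative_V0: "((\<lambda>\<xi>. V0 \<xi> u) has_real_derivative 4 / 15) (at \<xi>)"
  unfolding V0_def by (auto intro!: derivative_eq_intros)

definition sign_change_at :: "(real \<Rightarrow> real) \<Rightarrow> real \<Rightarrow> bool" where
  "sign_change_at H c \<longleftrightarrow>
     c \<in> {0<..<1} \<and> (\<forall>x\<in>{0<..<c}. 0 < H x) \<and> H c = 0 \<and> (\<forall>x\<in>{c<..<1}. H x < 0)"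

text \<open>Only the properties of f itself enter the argument.\<close>
locale standing =
  fixes f :: "real \<Rightarrow> real"
  assumes standing: "standing_f f"
begin

abbreviation "f1 \<equiv> deriv f"
abbreviation "f2 \<equiv> deriv f1"
abbreviation "f3 \<equiv> deriv f2"

lemma iterated_deriv_differentiable: "x \<in> {0<..<1} \<Longrightarrow> (deriv ^^ n) f differentiable at x"
  using standing unfolding standing_f_def smooth_on_def by blast

lemma has_real_derivative_f: "x \<in> {0<..<1} \<Longrightarrow> (f has_real_derivative f1 x) (at x)"
  using iterated_deriv_differentiable[of x 0] by (simp add: DERIV_deriv_iff_real_differentiable)

lemma has_real_derivative_f1: "x \<in> {0<..<1} \<Longrightarrow> (f1 has_real_derivative f2 x) (at x)"
  using iterated_deriv_differentiable[of x 1] by (simp add: DERIV_deriv_iff_real_differentiable)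

lemma has_real_derivative_f2: "x \<in> {0<..<1} \<Longrightarrow> (f2 has_real_derivative f3 x) (at x)"
  using iterated_deriv_differentiable[of x 2]
  by (simp add: DERIV_deriv_iff_real_differentiable numeral_2_eq_2)

lemma continuous_on_f1: "continuous_on {0<..<1} f1"
  using has_real_derivative_f1 by (meson DERIV_continuous continuous_at_imp_continuous_on)

lemma continuous_on_f2: "continuous_on {0<..<1} f2"
  using has_real_derivative_f2 by (meson DERIV_continuous continuous_at_imp_continuous_on)

lemma continuous_on_f3: "continuous_on {0<..<1} f3"
  using iterated_deriv_differentiable[of _ 3]
  by (intro continuous_at_imp_continuous_on ballI differentiable_imp_continuous_within)
    (simp add: numeral_3_eq_3)

lemma f1_neg: "x \<in> {0<..<1} \<Longrightarrow> f1 x < 0"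
  using standing unfolding standing_f_def by blast

lemma f_tendsto_at_right_0: "filterlim f at_top (at_right 0)"
  using standing unfolding standing_f_def by blast

lemma f_tendsto_at_left_1: "filterlim f at_bot (at_left 1)"
  using standing unfolding standing_f_def by blast

lemma f3_neg_near_0: "\<exists>d>0. \<forall>x\<in>{0<..<d}. f3 x < 0"
  using standing unfolding standing_f_def by (simp add: numeral_3_eq_3)

lemma f3_neg_near_1: "\<exists>d>0. \<forall>x\<in>{1-d<..<1}. f3 x < 0"
  using standing unfolding standing_f_def by (simp add: numeral_3_eq_3)

lemma f_unbounded_near_1:
  assumes "r < 1"
  shows "\<exists>t\<in>{r<..<1}. f t < B"
proof -
  have "\<forall>\<^sub>F t in at_left 1. f t < B"
    using f_tendsto_at_left_1 by (simp add: filterlim_at_bot_dense)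
  moreover have "\<forall>\<^sub>F t in at_left 1. t \<in> {r<..<1}" by (rule eventually_at_left_real) fact
  ultimately have "\<forall>\<^sub>F t in at_left 1. f t < B \<and> t \<in> {r<..<1}" by (rule eventually_conj)
  then show ?thesis using eventually_happens trivial_limit_at_left_real by blast
qed

lemma f1_weighted_unbounded_near_1: "r < 1 \<Longrightarrow> \<exists>t\<in>{r<..<1}. K \<le> sqrt (1 - t) * - f1 t"
  by (rule weighted_deriv_unbounded_near_1[OF has_real_derivative_f f_unbounded_near_1])

lemma f2_weighted_unbounded_near_1: "r < 1 \<Longrightarrow> \<exists>t\<in>{r<..<1}. K \<le> sqrt (1 - t) * - f2 t"
  by (rule weighted_deriv_unbounded_near_1[OF has_real_derivative_f1
        unbounded_of_weighted_unbounded_near_1[OF f1_weighted_unbounded_near_1]])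

lemma f2_pos_near_0: "\<exists>d. 0 < d \<and> d < 1 \<and> (\<forall>x\<in>{0<..d}. 0 < f2 x)"
proof -
  obtain d3 where d3: "0 < d3" "\<forall>x\<in>{0<..<d3}. f3 x < 0" using f3_neg_near_0 by blast
  define D where "D = min d3 1 / 2"
  have D: "0 < D" "D < d3" "D < 1" using d3(1) by (auto simp: D_def)
  have "\<exists>d\<in>{0<..<D}. 0 < f2 d"
  proof (rule ccontr)
    assume "\<not> ?thesis"
    then have nonpos: "f2 x \<le> 0" if "x \<in> {0<..<D}" for x using that not_less by blast
    have "f1 (D / 2) \<le> f1 x" if "x \<in> {0<..<D / 2}" for x
    proof (rule DERIV_nonpos_imp_nonincreasing[of x "D / 2"])
      fix z assume "x \<le> z" "z \<le> D / 2"
      then have "z \<in> {0<..<1}" "z \<in> {0<..<D}" using that D by auto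
      then show "\<exists>l. (f1 has_real_derivative l) (at z) \<and> l \<le> 0"
        using has_real_derivative_f1 nonpos by blast
    qed (use that in auto)
    moreover obtain x where "x \<in> {0<..<D / 2}" "f1 x < f1 (D / 2)"
      using deriv_unbounded_near_0[OF has_real_derivative_f f_tendsto_at_right_0, of "D / 2" "f1 (D / 2)"]
        D(1)
      by auto
    ultimately show False by force
  qed
  then obtain d where d: "d \<in> {0<..<D}" "0 < f2 d" by blast
  have "f2 d \<le> f2 x" if "x \<in> {0<..d}" for x
  proof (rule DERIV_nonpos_imp_nonincreasing[of x d])
    fix z assume "x \<le> z" "z \<le> d"
    then have "z \<in> {0<..<1}" "z \<in> {0<..<d3}" using that d D by auto
    then show "\<exists>l. (f2 has_real_derivative l) (at z) \<and> l \<le> 0"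
      using has_real_derivative_f2 d3(2) by (meson less_imp_le)
  qed (use that in auto)
  then show ?thesis using d D by (intro exI[of _ d]) force
qed

text \<open>The bound 3 / 4 \<le> v leaves room for the hypothesis u + 1 / 2 \<le> v of seg_moment_tail_le
  when u \<le> 1 / 4.\<close>
lemma f2_f3_neg_near_1: "\<exists>v. 3 / 4 \<le> v \<and> v < 1 \<and> (\<forall>x\<in>{v..<1}. f3 x < 0 \<and> f2 x < 0)"
proof -
  obtain d where d: "0 < d" "\<forall>x\<in>{1-d<..<1}. f3 x < 0" using f3_neg_near_1 by blast
  obtain v where v: "v \<in> {max (1 - d) (3 / 4)<..<1}" "f2 v < 0"
    using unbounded_of_weighted_unbounded_near_1[OF f2_weighted_unbounded_near_1,
        of "max (1 - d) (3 / 4)" 0]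
      d(1) by force
  have "f2 x \<le> f2 v" if "x \<in> {v..<1}" for x
  proof (rule DERIV_nonpos_imp_nonincreasing[of v x])
    fix z assume "v \<le> z" "z \<le> x"
    then have "z \<in> {0<..<1}" "z \<in> {1-d<..<1}" using that v by auto
    then show "\<exists>l. (f2 has_real_derivative l) (at z) \<and> l \<le> 0"
      using has_real_derivative_f2 d(2) by (meson less_imp_le)
  qed (use that in auto)
  then show ?thesis using v d(2) by (intro exI[of _ v]) force
qed

lemma f3_bdd_above: "\<exists>M\<ge>0. \<forall>x\<in>{0<..v}. f3 x \<le> M" if "v < 1"
proof -
  obtain d where d: "0 < d" "\<forall>x\<in>{0<..<d}. f3 x < 0" using f3_neg_near_0 by blast
  define D where "D = min d 1 / 2"
  have D: "0 < D" "D < d" using d(1) by (auto simp: D_def)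
  have "{D..v} \<subseteq> {0<..<1}" using D that by auto
  then obtain M where M: "0 \<le> M" "\<And>x. x \<in> {D..v} \<Longrightarrow> norm (f3 x) \<le> M"
    using continuous_on_compact_bound[OF compact_Icc continuous_on_subset[OF continuous_on_f3]] by blast
  have "f3 x \<le> M" if "x \<in> {0<..v}" for x
    using d(2)[rule_format, of x] M(1) M(2)[of x] that D by (cases "x < D") auto
  then show ?thesis using M(1) by blast
qed

lemma seg_moment_f1_neg: "u \<in> {0<..<1} \<Longrightarrow> \<xi> \<in> {0<..<1} \<Longrightarrow> seg_moment f1 0 u \<xi> < 0"
  by (rule seg_moment_neg[OF continuous_on_f1 f1_neg])

lemma seg_moment_f3_neg_near_1:
  "\<exists>\<xi>0\<in>{0<..<1}. \<forall>u\<in>{0<..1/4}. \<forall>\<xi>\<in>{\<xi>0..<1}. seg_moment f3 2 u \<xi> < 0"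
proof -
  obtain v where v: "3 / 4 \<le> v" "v < 1" "\<forall>x\<in>{v..<1}. f3 x < 0 \<and> f2 x < 0"
    using f2_f3_neg_near_1 by blast
  obtain M where M: "0 \<le> M" "\<forall>x\<in>{0<..v}. f3 x \<le> M" using f3_bdd_above[OF v(2)] by blast
  obtain t where t: "t \<in> {v<..<1}" "4 * (4 * M + \<bar>f2 v\<bar>) + 1 \<le> sqrt (1 - t) * - f2 t"
    using f2_weighted_unbounded_near_1[OF v(2)] by blast
  have "seg_moment f3 2 u \<xi> < 0" if u: "u \<in> {0<..1/4}" and \<xi>: "\<xi> \<in> {(1 + t) / 2..<1}" for u \<xi>
  proof -
    have "seg_moment f3 2 u \<xi> \<le> 4 * M + (1 / 2) ^ 2 * sqrt (1 - t) * (f2 t - f2 v)"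
      by (rule seg_moment_tail_le[OF has_real_derivative_f2 continuous_on_f3])
        (use u \<xi> v t M in \<open>auto simp: less_imp_le\<close>)
    moreover have "sqrt (1 - t) * - f2 v \<le> \<bar>f2 v\<bar>"
      using sqrt_one_minus_mult_le_abs[of t "- f2 v"] t v by simp
    ultimately show ?thesis using t(2) M(1) by (simp add: field_simps power2_eq_square)
  qed
  moreover have "(1 + t) / 2 \<in> {0<..<1}" using t v by auto
  ultimately show ?thesis by blast
qed

lemma seg_moment_f2_unbounded_near_1:
  assumes u: "u \<in> {0<..1/4}" and "r < 1"
  shows "\<exists>\<xi>\<in>{r<..<1}. seg_moment f2 1 u \<xi> \<le> - N"
proof -
  obtain v where v: "3 / 4 \<le> v" "v < 1" "\<forall>x\<in>{v..<1}. f3 x < 0 \<and> f2 x < 0"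
    using f2_f3_neg_near_1 by blast
  have "{u..v} \<subseteq> {0<..<1}" using u v by auto
  then obtain M where M: "0 \<le> M" "\<And>x. x \<in> {u..v} \<Longrightarrow> norm (f2 x) \<le> M"
    using continuous_on_compact_bound[OF compact_Icc continuous_on_subset[OF continuous_on_f2]] by blast
  obtain t where t: "t \<in> {max r v<..<1}" "2 * (4 * M + \<bar>N\<bar>) + \<bar>f1 v\<bar> \<le> sqrt (1 - t) * - f1 t"
    using f1_weighted_unbounded_near_1 assms(2) v(2) by (metis max_less_iff_conj)
  have "seg_moment f2 1 u ((1 + t) / 2) \<le> 4 * M + (1 / 2) ^ 1 * sqrt (1 - t) * (f1 t - f1 v)"
    by (rule seg_moment_tail_le[OF has_real_derivative_f1 continuous_on_f2])
      (use u v t M in \<open>auto simp: less_imp_le abs_le_iff\<close>)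
  moreover have "sqrt (1 - t) * - f1 v \<le> \<bar>f1 v\<bar>"
    using sqrt_one_minus_mult_le_abs[of t "- f1 v"] t v by simp
  ultimately have "seg_moment f2 1 u ((1 + t) / 2) \<le> - N"
    using t(2) abs_ge_self[of N] by (simp add: field_simps)
  moreover have "(1 + t) / 2 \<in> {r<..<1}" using t by auto
  ultimately show ?thesis by blast
qed

lemma seg_moment_f2_nonneg:
  assumes "\<beta> < 1"
  shows "\<exists>\<delta>>0. \<forall>u\<in>{0<..<\<delta>}. \<forall>\<xi>\<in>{0<..\<beta>}. 0 \<le> seg_moment f2 1 u \<xi>"
proof -
  obtain d where d: "0 < d" "d < 1" "\<forall>x\<in>{0<..d}. 0 < f2 x" using f2_pos_near_0 by blast
  define v where "v = d / 2"
  define \<beta>' where "\<beta>' = max \<beta> d"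
  have v: "0 < v" "v < d" and \<beta>': "\<beta> \<le> \<beta>'" "d \<le> \<beta>'" "\<beta>' < 1"
    using d assms by (auto simp: v_def \<beta>'_def)
  have "{v..\<beta>'} \<subseteq> {0<..<1}" using v \<beta>' by auto
  then obtain M where M: "0 \<le> M" "\<And>x. x \<in> {v..\<beta>'} \<Longrightarrow> norm (f2 x) \<le> M"
    using continuous_on_compact_bound[OF compact_Icc continuous_on_subset[OF continuous_on_f2]] by blast
  define T where "T = 2 * M / sqrt d"
  have "\<forall>\<^sub>F u in at_right 0. f v + \<bar>f1 v\<bar> + T \<le> f u"
    using f_tendsto_at_right_0 by (simp add: filterlim_at_top)
  then obtain b where b: "0 < b" "\<And>u. 0 < u \<Longrightarrow> u < b \<Longrightarrow> f v + \<bar>f1 v\<bar> + T \<le> f u"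
    unfolding eventually_at_right_field by auto
  have "0 \<le> seg_moment f2 1 u \<xi>" if u: "u \<in> {0<..<min b v}" and \<xi>: "\<xi> \<in> {0<..\<beta>}" for u \<xi>
  proof (cases "\<xi> \<le> d")
    case True
    show ?thesis
    proof (rule seg_moment_nonneg[OF continuous_on_f2])
      fix x assume "x \<in> {min u \<xi>..max u \<xi>}"
      then have "x \<in> {0<..d}" using u \<xi> v True by auto
      then show "0 \<le> f2 x" using d(3) by (simp add: less_imp_le)
    qed (use u v \<xi> \<beta>' d in auto)
  next
    case False
    have "2 * sqrt (2 * (\<xi> - v)) * T - 4 * M \<le> seg_moment f2 1 u \<xi>"
    proof (rule seg_moment_ge[OF has_real_derivative_f has_real_derivative_f1 continuous_on_f2])
      show "0 < u" "u < v" "v < \<xi>" "\<xi> < 1" using u v \<xi> \<beta>' False by auto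
      show "0 \<le> f2 x" if "x \<in> {u..v}" for x using d(3) that u v by (simp add: less_imp_le)
      show "- M \<le> f2 x" if "x \<in> {v..\<xi>}" for x using M(2)[of x] that \<xi> \<beta>' by auto
      show "0 \<le> T" using M(1) d(1) by (simp add: T_def)
      show "T \<le> f u - f v - \<bar>f1 v\<bar>" using b(2)[of u] u by auto
    qed (use M(1) in auto)
    moreover have "4 * M \<le> 2 * sqrt (2 * (\<xi> - v)) * T"
    proof -
      have "4 * M = 2 * sqrt d * T" using d(1) by (simp add: T_def)
      also have "\<dots> \<le> 2 * sqrt (2 * (\<xi> - v)) * T"
        using False M(1) d(1) by (intro mult_right_mono) (auto simp: v_def T_def)
      finally show ?thesis .
    qed
    ultimately show ?thesis by linarith
  qed
  then show ?thesis using b(1) v(1) by (intro exI[of _ "min b v"]) auto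
qed

lemma has_real_derivative_seg_moment_f1:
  "u \<in> {0<..<1} \<Longrightarrow> \<xi> \<in> {0<..<1} \<Longrightarrow> (seg_moment f1 0 u has_real_derivative seg_moment f2 1 u \<xi>) (at \<xi>)"
  using has_real_derivative_seg_moment[OF has_real_derivative_f1 continuous_on_f2, of u \<xi> 0] by simp

lemma has_real_derivative_seg_moment_f2:
  "u \<in> {0<..<1} \<Longrightarrow> \<xi> \<in> {0<..<1} \<Longrightarrow> (seg_moment f2 1 u has_real_derivative seg_moment f3 2 u \<xi>) (at \<xi>)"
  using has_real_derivative_seg_moment[OF has_real_derivative_f2 continuous_on_f3, of u \<xi> 1]
  by (simp add: numeral_2_eq_2)

lemma has_real_derivative_J0_deriv_numer:
  assumes "u \<in> {0<..<1}" "\<xi> \<in> {0<..<1}"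
  shows "(J0_deriv_numer f u has_real_derivative seg_moment f3 2 u \<xi> * V0 \<xi> u) (at \<xi>)"
  using DERIV_diff[OF DERIV_mult[OF has_real_derivative_seg_moment_f2[OF assms] has_real_derivative_V0]
      DERIV_cmult[OF has_real_derivative_seg_moment_f1[OF assms], of "4 / 15"]]
  unfolding J0_deriv_numer_def[abs_def] by (rule DERIV_cong) simp

lemma has_real_derivative_J0:
  assumes u: "u \<in> {0<..<1}" and \<xi>: "\<xi> \<in> {0<..<1}"
  shows "(J0 f u has_real_derivative - J0_deriv_numer f u \<xi> / (4 * sqrt 2 * (V0 \<xi> u)\<^sup>2)) (at \<xi>)"
proof -
  have V: "0 < V0 \<xi> u" using V0_pos u \<xi> by auto
  have "4 * sqrt 2 * V0 \<xi> u \<noteq> 0" using V by simp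
  from DERIV_divide[OF DERIV_minus[OF has_real_derivative_seg_moment_f1[OF u \<xi>]]
      DERIV_cmult[OF has_real_derivative_V0, of "4 * sqrt 2"] this]
  show ?thesis
    unfolding J0_eq[abs_def]
    by (rule DERIV_cong) (use V in \<open>simp add: J0_deriv_numer_def field_simps power2_eq_square\<close>)
qed

lemma J0_deriv_numer_pos:
  assumes "u \<in> {0<..<1}" "\<xi> \<in> {0<..<1}" "0 \<le> seg_moment f2 1 u \<xi>"
  shows "0 < J0_deriv_numer f u \<xi>"
proof -
  have "0 \<le> seg_moment f2 1 u \<xi> * V0 \<xi> u" using V0_pos[of \<xi> u] assms by simp
  then show ?thesis using seg_moment_f1_neg[OF assms(1,2)] unfolding J0_deriv_numer_def by simp
qed

text \<open>If J0_deriv_numer stayed nonnegative near 1, J0 would be nonincreasing there, which bounds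
  - seg_moment f1 0 u; against that bound the unboundedness of seg_moment f2 1 u wins.\<close>
lemma J0_deriv_numer_neg_near_1:
  assumes u: "u \<in> {0<..1/4}" and \<xi>0: "\<xi>0 \<in> {0<..<1}"
  shows "\<exists>\<xi>\<in>{\<xi>0<..<1}. J0_deriv_numer f u \<xi> < 0"
proof (rule ccontr)
  assume "\<not> ?thesis"
  then have nonneg: "0 \<le> J0_deriv_numer f u \<xi>" if "\<xi> \<in> {\<xi>0<..<1}" for \<xi> using that not_less by blast
  define \<xi>1 where "\<xi>1 = (\<xi>0 + 1) / 2"
  have \<xi>1: "\<xi>0 < \<xi>1" "\<xi>1 < 1" and u01: "u \<in> {0<..<1}" using \<xi>0 u by (auto simp: \<xi>1_def)
  define C where "C = 4 * sqrt 2 * J0 f u \<xi>1"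
  have C: "0 \<le> C"
    using seg_moment_f1_neg[OF u01, of \<xi>1] V0_pos[of \<xi>1 u] \<xi>0 \<xi>1 u01
    by (simp add: C_def J0_eq divide_nonpos_pos)
  have I0_bound: "- seg_moment f1 0 u \<xi> \<le> C" if \<xi>: "\<xi> \<in> {\<xi>1..<1}" for \<xi>
  proof -
    have V: "0 < V0 \<xi> u" "V0 \<xi> u \<le> 1" using V0_pos V0_le_one \<xi> \<xi>0 \<xi>1 u01 by auto
    have "J0 f u \<xi> \<le> J0 f u \<xi>1"
    proof (rule DERIV_nonpos_imp_nonincreasing[of \<xi>1 \<xi>])
      fix x assume "\<xi>1 \<le> x" "x \<le> \<xi>"
      then have x: "x \<in> {0<..<1}" "x \<in> {\<xi>0<..<1}" using \<xi> \<xi>0 \<xi>1 by auto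
      then have "- J0_deriv_numer f u x / (4 * sqrt 2 * (V0 x u)\<^sup>2) \<le> 0" using nonneg[of x] by simp
      then show "\<exists>l. (J0 f u has_real_derivative l) (at x) \<and> l \<le> 0"
        using has_real_derivative_J0[OF u01 x(1)] by blast
    qed (use \<xi> in auto)
    then have "- seg_moment f1 0 u \<xi> \<le> C * V0 \<xi> u"
      using V by (simp add: J0_eq C_def field_simps)
    also have "\<dots> \<le> C" using V C by (simp add: mult_left_le)
    finally show ?thesis .
  qed
  define N where "N = (4 / 15 * C + 1) / V0 \<xi>1 u"
  have V1: "0 < V0 \<xi>1 u" using V0_pos \<xi>0 \<xi>1 u01 by auto
  obtain \<xi> where \<xi>: "\<xi> \<in> {\<xi>1<..<1}" "seg_moment f2 1 u \<xi> \<le> - N"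
    using seg_moment_f2_unbounded_near_1[OF u \<xi>1(2)] by blast
  have "V0 \<xi>1 u \<le> V0 \<xi> u" using \<xi> by (simp add: V0_def)
  moreover have "0 \<le> N" using C V1 by (simp add: N_def)
  ultimately have "N * V0 \<xi>1 u \<le> N * V0 \<xi> u" by (rule mult_left_mono)
  moreover have "seg_moment f2 1 u \<xi> * V0 \<xi> u \<le> - N * V0 \<xi> u"
    using \<xi>(2) V1 \<open>V0 \<xi>1 u \<le> V0 \<xi> u\<close> by (intro mult_right_mono) auto
  ultimately have "seg_moment f2 1 u \<xi> * V0 \<xi> u \<le> - N * V0 \<xi>1 u" by simp
  also have "\<dots> = - (4 / 15 * C + 1)" using V1 by (simp add: N_def)
  finally have "J0_deriv_numer f u \<xi> < 0"
    using I0_bound[of \<xi>] \<xi>(1) unfolding J0_deriv_numer_def by simp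
  then show False using nonneg[of \<xi>] \<xi>(1) \<xi>1 by simp
qed

lemma J0_deriv_numer_sign_change: "\<exists>\<delta>\<in>{0<..1}. \<forall>u\<in>{0<..<\<delta>}. \<exists>c. sign_change_at (J0_deriv_numer f u) c"
proof -
  obtain \<xi>0 where \<xi>0: "\<xi>0 \<in> {0<..<1}" "\<forall>u\<in>{0<..1/4}. \<forall>\<xi>\<in>{\<xi>0..<1}. seg_moment f3 2 u \<xi> < 0"
    using seg_moment_f3_neg_near_1 by blast
  obtain \<delta> where \<delta>: "0 < \<delta>" "\<forall>u\<in>{0<..<\<delta>}. \<forall>\<xi>\<in>{0<..\<xi>0}. 0 \<le> seg_moment f2 1 u \<xi>"
    using seg_moment_f2_nonneg[of \<xi>0] \<xi>0(1) by auto
  have "\<exists>c. sign_change_at (J0_deriv_numer f u) c" if u: "u \<in> {0<..<min \<delta> (1/4)}" for u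
  proof -
    have u01: "u \<in> {0<..<1}" and u4: "u \<in> {0<..1/4}" using u by auto
    obtain x1 where "x1 \<in> {\<xi>0<..<1}" "J0_deriv_numer f u x1 < 0"
      using J0_deriv_numer_neg_near_1[OF u4 \<xi>0(1)] by blast
    then have "\<exists>c\<in>{0<..<1}. (\<forall>x\<in>{0<..<c}. 0 < J0_deriv_numer f u x) \<and> J0_deriv_numer f u c = 0
        \<and> (\<forall>x\<in>{c<..<1}. J0_deriv_numer f u x < 0)"
    proof (intro sign_change_of_decreasing[OF has_real_derivative_J0_deriv_numer[OF u01]])
      show "seg_moment f3 2 u x * V0 x u < 0" if "x \<in> {\<xi>0..<1}" for x
        using \<xi>0 u4 that V0_pos[of x u] by (simp add: mult_neg_pos)
      show "0 < J0_deriv_numer f u x" if "x \<in> {0<..\<xi>0}" for x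
        using J0_deriv_numer_pos[OF u01, of x] \<delta>(2) u that \<xi>0(1) by auto
    qed (use \<xi>0(1) in auto)
    then show ?thesis unfolding sign_change_at_def by blast
  qed
  moreover have "min \<delta> (1/4) \<in> {0<..1}" using \<delta>(1) by auto
  ultimately show ?thesis by blast
qed

lemma J0_unique_min_of_sign_change:
  assumes "\<delta> \<le> 1" and c: "\<And>u. u \<in> {0<..<\<delta>} \<Longrightarrow> sign_change_at (J0_deriv_numer f u) (c u)"
  shows "\<forall>u\<in>{0<..<\<delta>}.
        c u \<in> {0<..<1}
      \<and> (J0 f u has_real_derivative 0) (at (c u))
      \<and> (\<forall>\<xi>\<in>{0<..<1}. (J0 f u has_real_derivative 0) (at \<xi>) \<longrightarrow> \<xi> = c u)
      \<and> (\<forall>\<eta>\<in>{0<..<1}. J0 f u (c u) \<le> J0 f u \<eta>)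
      \<and> (\<forall>\<xi>\<in>{0<..<1}. (\<forall>\<eta>\<in>{0<..<1}. J0 f u \<xi> \<le> J0 f u \<eta>) \<longrightarrow> \<xi> = c u)"
proof
  fix u assume "u \<in> {0<..<\<delta>}"
  then have u: "u \<in> {0<..<1}" and sc: "sign_change_at (J0_deriv_numer f u) (c u)" using assms by auto
  define J' where "J' \<xi> = - J0_deriv_numer f u \<xi> / (4 * sqrt 2 * (V0 \<xi> u)\<^sup>2)" for \<xi>
  have cu: "c u \<in> {0<..<1}" using sc by (simp add: sign_change_at_def)
  have deriv: "(J0 f u has_real_derivative J' \<xi>) (at \<xi>)" if "\<xi> \<in> {0<..<1}" for \<xi>
    unfolding J'_def by (rule has_real_derivative_J0[OF u that])
  have denom: "0 < 4 * sqrt 2 * (V0 \<xi> u)\<^sup>2" if "\<xi> \<in> {0<..<1}" for \<xi>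
    using V0_pos[of \<xi> u] that u by simp
  have neg: "J' \<xi> < 0" if "\<xi> \<in> {0<..<c u}" for \<xi>
  proof -
    have "0 < J0_deriv_numer f u \<xi>" using sc that by (simp add: sign_change_at_def)
    then show ?thesis unfolding J'_def using denom[of \<xi>] that cu by (intro divide_neg_pos) auto
  qed
  have pos: "0 < J' \<xi>" if "\<xi> \<in> {c u<..<1}" for \<xi>
  proof -
    have "J0_deriv_numer f u \<xi> < 0" using sc that by (simp add: sign_change_at_def)
    then show ?thesis unfolding J'_def using denom[of \<xi>] that cu by (intro divide_pos_pos) auto
  qed
  have zero: "J' (c u) = 0" using sc by (simp add: J'_def sign_change_at_def)
  note min = unique_min_of_deriv_sign[OF deriv cu neg zero pos]
  show "c u \<in> {0<..<1}
      \<and> (J0 f u has_real_derivative 0) (at (c u))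
      \<and> (\<forall>\<xi>\<in>{0<..<1}. (J0 f u has_real_derivative 0) (at \<xi>) \<longrightarrow> \<xi> = c u)
      \<and> (\<forall>\<eta>\<in>{0<..<1}. J0 f u (c u) \<le> J0 f u \<eta>)
      \<and> (\<forall>\<xi>\<in>{0<..<1}. (\<forall>\<eta>\<in>{0<..<1}. J0 f u \<xi> \<le> J0 f u \<eta>) \<longrightarrow> \<xi> = c u)"
    using deriv[OF cu] zero by (intro conjI cu min) simp
qed

lemma sign_change_tendsto_1:
  assumes "\<delta> \<in> {0<..1}" and c: "\<And>u. u \<in> {0<..<\<delta>} \<Longrightarrow> sign_change_at (J0_deriv_numer f u) (c u)"
  shows "(c \<longlongrightarrow> 1) (at_right 0)"
proof (rule tendstoI)
  fix \<epsilon> :: real assume "0 < \<epsilon>"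
  obtain \<delta>' where \<delta>': "0 < \<delta>'" "\<forall>u\<in>{0<..<\<delta>'}. \<forall>\<xi>\<in>{0<..1 - \<epsilon> / 2}. 0 \<le> seg_moment f2 1 u \<xi>"
    using seg_moment_f2_nonneg[of "1 - \<epsilon> / 2"] \<open>0 < \<epsilon>\<close> by auto
  have "dist (c u) 1 < \<epsilon>" if u: "u \<in> {0<..<min \<delta> \<delta>'}" for u
  proof -
    have cu: "c u \<in> {0<..<1}" "J0_deriv_numer f u (c u) = 0"
      using c[of u] u by (auto simp: sign_change_at_def)
    have "\<not> c u \<le> 1 - \<epsilon> / 2"
    proof
      assume "c u \<le> 1 - \<epsilon> / 2"
      then have "0 \<le> seg_moment f2 1 u (c u)" using \<delta>'(2) u cu(1) by auto
      then have "0 < J0_deriv_numer f u (c u)"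
        by (rule J0_deriv_numer_pos[rotated 2]) (use u cu(1) assms(1) in auto)
      then show False using cu(2) by simp
    qed
    then show ?thesis using cu(1) \<open>0 < \<epsilon>\<close> by (simp add: dist_real_def)
  qed
  then show "\<forall>\<^sub>F u in at_right 0. dist (c u) 1 < \<epsilon>"
    unfolding eventually_at_right_field using assms(1) \<delta>'(1) by (intro exI[of _ "min \<delta> \<delta>'"]) auto
qed

end

theorem lemma4p7:
  fixes f :: "real \<Rightarrow> real"
  assumes "standing_f f"
  shows "\<exists>\<delta>>0. \<exists>\<xi>c :: real \<Rightarrow> real.
     (\<forall>u3\<in>{0<..<\<delta>}.
        \<xi>c u3 \<in> {0<..<1}
      \<and> (J0 f u3 has_real_derivative 0) (at (\<xi>c u3))
      \<and> (\<forall>\<xi>\<in>{0<..<1}. (J0 f u3 has_real_derivative 0) (at \<xi>) \<longrightarrow> \<xi> = \<xi>c u3)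
      \<and> (\<forall>\<eta>\<in>{0<..<1}. J0 f u3 (\<xi>c u3) \<le> J0 f u3 \<eta>)
      \<and> (\<forall>\<xi>\<in>{0<..<1}. (\<forall>\<eta>\<in>{0<..<1}. J0 f u3 \<xi> \<le> J0 f u3 \<eta>) \<longrightarrow> \<xi> = \<xi>c u3))
   \<and> (\<xi>c \<longlongrightarrow> 1) (at_right 0)"
proof -
  interpret standing f by unfold_locales (rule assms)
  obtain \<delta> where \<delta>: "\<delta> \<in> {0<..1}" "\<And>u. u \<in> {0<..<\<delta>} \<Longrightarrow> \<exists>c. sign_change_at (J0_deriv_numer f u) c"
    using J0_deriv_numer_sign_change by blast
  define \<xi>c where "\<xi>c u = (SOME c. sign_change_at (J0_deriv_numer f u) c)" for u
  have \<xi>c: "sign_change_at (J0_deriv_numer f u) (\<xi>c u)" if "u \<in> {0<..<\<delta>}" for u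
    unfolding \<xi>c_def using someI_ex[OF \<delta>(2)[OF that]] .
  have "0 < \<delta>" using \<delta>(1) by simp
  moreover note J0_unique_min_of_sign_change[of \<delta> \<xi>c, OF _ \<xi>c]
  moreover have "(\<xi>c \<longlongrightarrow> 1) (at_right 0)" by (rule sign_change_tendsto_1[OF \<delta>(1) \<xi>c])
  ultimately show ?thesis using \<delta>(1) by auto
qed

end
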